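(* For an integer $i\ge 0$ let $i_0i_1i_2\dots$ be its base-3 digits, least significant first, with $i=\sum_{j\ge0}i_j3^j$ (the sequence ends in infinitely many $0$'s). Call $i$ a 2-before-0 number if the first digit in this sequence that is different from $1$ equals $2$, and a 0-before-2 number otherwise. Define $x_i=1$ if $i$ is a 0-before-2 number and $x_i=-1$ if $i$ is a 2-before-0 number. Then the sequence $x_0,x_1,x_2,\dots$ equals $w_\alpha$ (term by term, indexing $w_\alpha$ from $0$).
   Context: $w_\alpha=\lim_{n\to\infty}\phi^n(1)$, where $\phi$ is the monoid endomorphism of $\{1,-1\}^*$ determined by $\phi(1)=1\,1\,(-1)$ and $\phi(-1)=1\,(-1)\,(-1)$. *)

theory Defs
  imports Main
begin

fun phi_letter :: "int \<Rightarrow> int list" where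
  "phi_letter x = (if x = 1 then [1, 1, -1] else [1, -1, -1])"

definition phi :: "int list \<Rightarrow> int list" where
  "phi w = concat (map phi_letter w)"

definition w_alpha :: "nat \<Rightarrow> int" where
  "w_alpha = (THE w. \<forall>n k. k < length ((phi ^^ n) [1]) \<longrightarrow> w k = ((phi ^^ n) [1]) ! k)"

definition digit3 :: "nat \<Rightarrow> nat \<Rightarrow> nat" where
  "digit3 i j = (i div 3 ^ j) mod 3"

text \<open>i is a 2-before-0 number if the first base-3 digit different from 1 equals 2.
  (Such a digit always exists since the digit sequence ends in zeros.)\<close>

definition two_before_zero :: "nat \<Rightarrow> bool" where
  "two_before_zero i = (digit3 i (LEAST j. digit3 i j \<noteq> 1) = 2)"

definition x_seq :: "nat \<Rightarrow> int" where
  "x_seq i = (if two_before_zero i then -1 else 1)"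

end

theory Submission
  imports Defs
begin

text \<open>The morphism \<open>phi\<close> replaces the letter at position \<open>q\<close> by the block at positions
  \<open>3q, 3q+1, 3q+2\<close>; this block starts with \<open>1\<close>, ends with \<open>-1\<close>, and its middle letter
  is the original one. Reading off the least significant base-3 digit, \<open>x_seq\<close> obeys the
  same rule: last digit 0 gives \<open>1\<close>, last digit 2 gives \<open>-1\<close>, and last digit 1 is skipped,
  so \<open>x_seq (3q+1) = x_seq q\<close>. Hence every \<open>phi^n [1]\<close> is a prefix of \<open>x_seq\<close>.\<close>

lemma phi_Cons: "phi (a # w) = phi_letter a @ phi w"
  by (simp add: phi_def)

lemma length_phi: "length (phi w) = 3 * length w"
  by (induction w) (simp_all add: phi_def)

lemma nth_phi:
  assumes "q < length w" and "r < 3"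
  shows "phi w ! (3 * q + r) = phi_letter (w ! q) ! r"
  using assms
proof (induction w arbitrary: q)
  case Nil
  then show ?case by simp
next
  case (Cons a w)
  show ?case
  proof (cases q)
    case 0
    with Cons.prems show ?thesis by (simp add: phi_Cons nth_append)
  next
    case (Suc q')
    then have "3 * q + r = 3 + (3 * q' + r)" by simp
    with Cons.IH[of q'] Cons.prems show ?thesis by (simp add: Suc phi_Cons nth_append)
  qed
qed

lemma length_phi_power_one: "length ((phi ^^ n) [1]) = 3 ^ n"
  by (induction n) (simp_all add: length_phi)

lemma digit3_0: "r < 3 \<Longrightarrow> digit3 (3 * q + r) 0 = r"
  by (simp add: digit3_def)

lemma digit3_Suc:
  assumes "r < 3"
  shows "digit3 (3 * q + r) (Suc j) = digit3 q j"
proof -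
  have "(3 * q + r) div 3 ^ Suc j = ((3 * q + r) div 3) div 3 ^ j"
    by (simp add: div_mult2_eq mult.commute)
  also have "(3 * q + r) div 3 = q"
    using assms by simp
  finally show ?thesis
    by (simp add: digit3_def)
qed

lemma digit3_self: "digit3 q q = 0"
proof -
  have "q < 3 ^ q"
    by (induction q) auto
  then show ?thesis
    by (simp add: digit3_def)
qed

lemma x_seq_3_mult_add:
  assumes r: "r < 3"
  shows "x_seq (3 * q + r) = (if r = 0 then 1 else if r = 2 then -1 else x_seq q)"
proof (cases "r = 1")
  case False
  then have "(LEAST j. digit3 (3 * q + r) j \<noteq> 1) = 0"
    using digit3_0[OF r] by (intro Least_eq_0) simp
  with False r show ?thesis
    by (auto simp: x_seq_def two_before_zero_def digit3_0)
next
  case True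
  have "digit3 (3 * q + r) (Suc q) \<noteq> 1"
    using digit3_Suc[OF r] digit3_self by simp
  then have "(LEAST j. digit3 (3 * q + r) j \<noteq> 1) = Suc (LEAST j. digit3 (3 * q + r) (Suc j) \<noteq> 1)"
    by (rule Least_Suc) (use digit3_0[OF r] True in simp)
  also have "\<dots> = Suc (LEAST j. digit3 q j \<noteq> 1)"
    using digit3_Suc[OF r] by simp
  finally show ?thesis
    using True digit3_Suc[OF r] by (simp add: x_seq_def two_before_zero_def)
qed

lemma x_seq_3_mult_add_eq_phi_letter:
  assumes "r < 3"
  shows "x_seq (3 * q + r) = phi_letter (x_seq q) ! r"
proof -
  have "r = 0 \<or> r = 1 \<or> r = 2"
    using assms by auto
  then show ?thesis
    using x_seq_3_mult_add[OF assms] by (auto simp: x_seq_def)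
qed

lemma nth_phi_power_one: "k < 3 ^ n \<Longrightarrow> (phi ^^ n) [1] ! k = x_seq k"
proof (induction n arbitrary: k)
  case 0
  then show ?case
    using x_seq_3_mult_add[of 0 0] by simp
next
  case (Suc n)
  define q r where "q = k div 3" and "r = k mod 3"
  have k: "k = 3 * q + r" and r: "r < 3"
    by (simp_all add: q_def r_def)
  have q: "q < 3 ^ n"
    using Suc.prems k by simp
  have "(phi ^^ Suc n) [1] ! k = phi_letter ((phi ^^ n) [1] ! q) ! r"
    using nth_phi[of q "(phi ^^ n) [1]" r] q r k by (simp add: length_phi_power_one)
  also have "\<dots> = x_seq k"
    using Suc.IH[OF q] x_seq_3_mult_add_eq_phi_letter[OF r] k by simp
  finally show ?case .
qed

lemma w_alpha_eqI:
  assumes "\<And>n k. k < 3 ^ n \<Longrightarrow> w k = (phi ^^ n) [1] ! k"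
  shows "w_alpha = w"
  unfolding w_alpha_def
proof (rule the_equality)
  show "\<forall>n k. k < length ((phi ^^ n) [1]) \<longrightarrow> w k = (phi ^^ n) [1] ! k"
    using assms by (simp add: length_phi_power_one)
next
  fix v
  assume v: "\<forall>n k. k < length ((phi ^^ n) [1]) \<longrightarrow> v k = (phi ^^ n) [1] ! k"
  show "v = w"
  proof
    fix k :: nat
    have "k < 3 ^ k"
      by (induction k) auto
    with v assms show "v k = w k"
      by (simp add: length_phi_power_one)
  qed
qed

theorem mainTheorem4:
  shows "\<forall>i. x_seq i = w_alpha i"
  using w_alpha_eqI[of x_seq] nth_phi_power_one by simp

end
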